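(* Assume the setting below, and let $\gamma=\sup_{W_1\in V_{1,H},W_2\in V_{2,H}}\frac{(T_1W_1,T_2W_2)}{\|T_1W_1\|\,\|T_2W_2\|}$ (with $\|\cdot\|$ the $L^2(\Omega)$ norm), assumed to lie in $(0,1)$. If $$\tau^2\le 2(1-\gamma^2)\inf_{W\in V_{2,H}}\frac{\|W\|_{m_{22}}^2}{\|W\|_{a_{22}}^2},$$ then discretization scheme 1 is stable; that is, the discrete energy $E^{n+\frac12}$ is conserved in $n$ and satisfies $E^{n+\frac12}\ge \|(U_1^{n+1},U_2^{n+1})\|_c^2+\|(U_1^n,U_2^n)\|_c^2+\|(U_1^{n+1},U_2^n)\|_a^2+\|(U_1^n,U_2^{n+1})\|_a^2\ge0$ for all $n\ge0$.
   Context: Let $\Omega\subset\mathbb{R}^d$ be bounded, $\kappa>0$ a coefficient, $a(u,v)=\int_\Omega\kappa\nabla u\cdot\nabla v$, and $(\cdot,\cdot)$ the $L^2(\Omega)$ inner product. $V_{1,H},V_{2,H}$ are finite-dimensional spaces (in the paper $V_{j,H}=\prod_{k\in I_j}V_H$ for a coarse finite element space $V_H$ and a partition $I_1\sqcup I_2$ of the continua indices), with linear maps $T_{j,0},T_{j,1}$ on $V_{j,H}$ and $T_j=T_{j,0}+T_{j,1}$ (in the paper, $T_{j,0}U=\sum_K\mathbf{1}_K\sum_{k\in I_j}\phi_k^KU_k$, $T_{j,1}U=\sum_K\mathbf{1}_K\sum_{k\in I_j}\sum_m\phi_k^{K,m}\partial_{x_m}U_k$ with fixed multiscale basis functions). Bilinear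 forms: $m_{ij}(U,W)=(T_jU,T_iW)$, $a_{ij}(U,W)=a(T_{j,1}U,T_{i,1}W)$, $c_{ij}(U,W)=a(T_{j,0}U,T_{i,0}W)$ for $U\in V_{j,H},W\in V_{i,H}$; $\|W\|_{m_{22}}^2=m_{22}(W,W)$, $\|W\|_{a_{22}}^2=a_{22}(W,W)$; $\|(W_1,W_2)\|_x^2=\sum_{i,j=1}^2x_{ij}(W_j,W_i)$ for $x\in\{m,a,c\}$. Discretization scheme 1 (with zero source, as assumed in the paper's stability analysis), time step $\tau>0$: for $n\ge1$, for all $W_1\in V_{1,H}$, $\tfrac{1}{\tau^2} m_{11}(U_1^{n+1}-2U_1^n+U_1^{n-1},W_1)+\tfrac{1}{\tau^2} m_{12}(U_2^{n+1}-2U_2^n+U_2^{n-1},W_1)+\tfrac12 a_{11}(U_1^{n+1}+U_1^{n-1},W_1)+a_{12}(U_2^n,W_1)+\tfrac12 c_{11}(U_1^{n+1}+U_1^{n-1},W_1)+\tfrac12 c_{12}(U_2^{n+1}+U_2^{n-1},W_1)=0$, and for all $W_2\in V_{2,H}$, $\tfrac{1}{\tau^2} m_{22}(U_2^{n+1}-2U_2^n+U_2^{n-1},W_2)+\tfrac{1}{\tau^2} m_{21}(U_1^{n+1}-2U_1^n+U_1^{n-1},W_2)+a_{21}(U_1^n,W_2)+a_{22}(U_2^n,W_2)+\tfrac12 c_{21}(U_1^{n+1}+U_1^{n-1},W_2)+\tfrac12 c_{22}(U_2^{n+1}+U_2^{n-1},W_2)=0$. Discrete energy: $E^{n+\frac12}=\tfrac{2}{\tau^2}\|(U_1^{n+1}-U_1^n,U_2^{n+1}-U_2^n)\|_m^2+\|(U_1^{n+1},U_2^{n+1})\|_c^2+\|(U_1^n,U_2^n)\|_c^2+\|(U_1^{n+1},U_2^n)\|_a^2+\|(U_1^n,U_2^{n+1})\|_a^2-\|U_2^{n+1}-U_2^n\|_{a_{22}}^2$.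 The infimum is over nonzero $W$. *)

theory Defs
  imports "HOL-Analysis.Analysis"
begin

text \<open>The target function space is a real vector space 'f carrying the
  L2 inner product ip and the energy form a (both symmetric, bilinear, positive semidefinite).
  The coarse spaces V_{1,H}, V_{2,H} are finite-dimensional real spaces 'v1, 'v2, and
  T_{j,0}, T_{j,1} are linear maps into 'f.\<close>

definition sym_psd_form :: "('f::real_vector \<Rightarrow> 'f \<Rightarrow> real) \<Rightarrow> bool" where
  "sym_psd_form b \<longleftrightarrow> bilinear b \<and> (\<forall>u v. b u v = b v u) \<and> (\<forall>u. 0 \<le> b u u)"

text \<open>The pair norm: norm_x^2 (W1,W2) = sum_{i,j} x_ij(W_j,W_i), where
  x_ij(U,W) = b(S_j U, S_i W).\<close>
definition pnorm2 :: "('f \<Rightarrow> 'f \<Rightarrow> real) \<Rightarrow> ('v1 \<Rightarrow> 'f) \<Rightarrow> ('v2 \<Rightarrow> 'f) \<Rightarrow> 'v1 \<Rightarrow> 'v2 \<Rightarrow> real" where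
  "pnorm2 b S1 S2 W1 W2 =
     b (S1 W1) (S1 W1) + b (S2 W2) (S1 W1) + b (S1 W1) (S2 W2) + b (S2 W2) (S2 W2)"

definition l2norm :: "('f \<Rightarrow> 'f \<Rightarrow> real) \<Rightarrow> 'f \<Rightarrow> real" where
  "l2norm ip u = sqrt (ip u u)"

definition gamma_const :: "('f \<Rightarrow> 'f \<Rightarrow> real) \<Rightarrow> ('v1 \<Rightarrow> 'f) \<Rightarrow> ('v2 \<Rightarrow> 'f) \<Rightarrow> real" where
  "gamma_const ip T1 T2 =
     Sup {ip (T1 W1) (T2 W2) / (l2norm ip (T1 W1) * l2norm ip (T2 W2)) | W1 W2.
            l2norm ip (T1 W1) \<noteq> 0 \<and> l2norm ip (T2 W2) \<noteq> 0}"

text \<open>inf over nonzero W of norm_{m22}^2 W / norm_{a22}^2 W, in the extended reals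
  (a quotient with zero denominator and positive numerator is +infinity).\<close>
definition mass_stiff_inf :: "('f \<Rightarrow> 'f \<Rightarrow> real) \<Rightarrow> ('f \<Rightarrow> 'f \<Rightarrow> real) \<Rightarrow> ('v2::zero \<Rightarrow> 'f)
     \<Rightarrow> ('v2 \<Rightarrow> 'f) \<Rightarrow> ereal" where
  "mass_stiff_inf ip a T2 T21 =
     Inf {ereal (ip (T2 W) (T2 W)) / ereal (a (T21 W) (T21 W)) | W. W \<noteq> 0}"

text \<open>Discretization scheme 1 with zero source (equations for n >= 1).\<close>
definition scheme1 :: "('f::real_vector \<Rightarrow> 'f \<Rightarrow> real) \<Rightarrow> ('f \<Rightarrow> 'f \<Rightarrow> real)
     \<Rightarrow> ('v1::real_vector \<Rightarrow> 'f) \<Rightarrow> ('v1 \<Rightarrow> 'f) \<Rightarrow> ('v2::real_vector \<Rightarrow> 'f) \<Rightarrow> ('v2 \<Rightarrow> 'f)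
     \<Rightarrow> real \<Rightarrow> (nat \<Rightarrow> 'v1) \<Rightarrow> (nat \<Rightarrow> 'v2) \<Rightarrow> bool" where
  "scheme1 ip a T10 T11 T20 T21 \<tau> U1 U2 \<longleftrightarrow>
   (let T1 = (\<lambda>U. T10 U + T11 U); T2 = (\<lambda>U. T20 U + T21 U) in
   (\<forall>n\<ge>1. \<forall>W1.
      1 / \<tau>\<^sup>2 * ip (T1 (U1 (n+1) - 2 *\<^sub>R U1 n + U1 (n-1))) (T1 W1)
    + 1 / \<tau>\<^sup>2 * ip (T2 (U2 (n+1) - 2 *\<^sub>R U2 n + U2 (n-1))) (T1 W1)
    + 1/2 * a (T11 (U1 (n+1) + U1 (n-1))) (T11 W1)
    + a (T21 (U2 n)) (T11 W1)
    + 1/2 * a (T10 (U1 (n+1) + U1 (n-1))) (T10 W1)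
    + 1/2 * a (T20 (U2 (n+1) + U2 (n-1))) (T10 W1) = 0) \<and>
   (\<forall>n\<ge>1. \<forall>W2.
      1 / \<tau>\<^sup>2 * ip (T2 (U2 (n+1) - 2 *\<^sub>R U2 n + U2 (n-1))) (T2 W2)
    + 1 / \<tau>\<^sup>2 * ip (T1 (U1 (n+1) - 2 *\<^sub>R U1 n + U1 (n-1))) (T2 W2)
    + a (T11 (U1 n)) (T21 W2)
    + a (T21 (U2 n)) (T21 W2)
    + 1/2 * a (T10 (U1 (n+1) + U1 (n-1))) (T20 W2)
    + 1/2 * a (T20 (U2 (n+1) + U2 (n-1))) (T20 W2) = 0))"

definition energy :: "('f::real_vector \<Rightarrow> 'f \<Rightarrow> real) \<Rightarrow> ('f \<Rightarrow> 'f \<Rightarrow> real)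
     \<Rightarrow> ('v1::real_vector \<Rightarrow> 'f) \<Rightarrow> ('v1 \<Rightarrow> 'f) \<Rightarrow> ('v2::real_vector \<Rightarrow> 'f) \<Rightarrow> ('v2 \<Rightarrow> 'f)
     \<Rightarrow> real \<Rightarrow> (nat \<Rightarrow> 'v1) \<Rightarrow> (nat \<Rightarrow> 'v2) \<Rightarrow> nat \<Rightarrow> real" where
  "energy ip a T10 T11 T20 T21 \<tau> U1 U2 n =
     2 / \<tau>\<^sup>2 * pnorm2 ip (\<lambda>U. T10 U + T11 U) (\<lambda>U. T20 U + T21 U)
                   (U1 (n+1) - U1 n) (U2 (n+1) - U2 n)
   + pnorm2 a T10 T20 (U1 (n+1)) (U2 (n+1))
   + pnorm2 a T10 T20 (U1 n) (U2 n)
   + pnorm2 a T11 T21 (U1 (n+1)) (U2 n)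
   + pnorm2 a T11 T21 (U1 n) (U2 (n+1))
   - a (T21 (U2 (n+1) - U2 n)) (T21 (U2 (n+1) - U2 n))"

end

theory Submission
  imports Defs
begin

(* Test the first equation of the scheme with U_1^{n+1} - U_1^{n-1}, the second with
   U_2^{n+1} - U_2^{n-1}, and add.  Every term becomes a difference of consecutive quantities:
   the mass and c-terms by b(d - e, d + e) = |d|^2 - |e|^2, and the a-terms, where U_2 is treated
   explicitly, by a polarisation identity for the staggered pairs (U_1^{n+1}, U_2^n),
   (U_1^n, U_2^{n+1}).  Hence E^{n+1/2} is conserved.
   The only negative term of the energy, |U_2^{n+1} - U_2^n|^2_{a22}, is bounded by the CFL
   condition by 2(1 - gamma^2)/tau^2 |T_2 (U_2^{n+1} - U_2^n)|^2, and the strengthened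
   Cauchy-Schwarz inequality (T_1 W_1, T_2 W_2) >= -gamma |T_1 W_1| |T_2 W_2| gives
   |T_1 W_1 + T_2 W_2|^2 >= (1 - gamma^2) |T_2 W_2|^2, so the kinetic term absorbs it. *)

lemma sym_psd_formD:
  assumes "sym_psd_form b"
  shows "bilinear b" "b u v = b v u" "0 \<le> b u u"
  using assms by (auto simp: sym_psd_form_def)

lemma pnorm2_eq:
  assumes "bilinear b"
  shows "pnorm2 b S1 S2 x y = b (S1 x + S2 y) (S1 x + S2 y)"
  by (simp add: pnorm2_def bilinear_ladd[OF assms] bilinear_radd[OF assms])

lemma bilinear_add_add:
  assumes "bilinear b"
  shows "b (u1 + u2) (w1 + w2) = b u1 w1 + b u2 w1 + b u1 w2 + b u2 w2"
  by (simp add: bilinear_ladd[OF assms] bilinear_radd[OF assms])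

lemma symmetric_bilinear_sum_diff:
  assumes b: "bilinear b" and sym: "\<And>u v. b u v = b v u"
  shows "b (d + e) (d - e) = b d d - b e e"
  using sym[of e d]
  by (simp add: bilinear_ladd[OF b] bilinear_radd[OF b] bilinear_lsub[OF b] bilinear_rsub[OF b])

(* E^{n+1/2} in terms of X = T_1 U_1 + T_2 U_2, C = T_{1,0} U_1 + T_{2,0} U_2,
   A = T_{1,1} U_1 and B = T_{2,1} U_2. *)
definition leapfrog_energy ::
  "('f::real_vector \<Rightarrow> 'f \<Rightarrow> real) \<Rightarrow> ('f \<Rightarrow> 'f \<Rightarrow> real) \<Rightarrow> real
    \<Rightarrow> (nat \<Rightarrow> 'f) \<Rightarrow> (nat \<Rightarrow> 'f) \<Rightarrow> (nat \<Rightarrow> 'f) \<Rightarrow> (nat \<Rightarrow> 'f) \<Rightarrow> nat \<Rightarrow> real" where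
  "leapfrog_energy m a \<tau> X C A B n =
     2 / \<tau>\<^sup>2 * m (X (Suc n) - X n) (X (Suc n) - X n)
   + a (C (Suc n)) (C (Suc n)) + a (C n) (C n)
   + a (A (Suc n) + B n) (A (Suc n) + B n) + a (A n + B (Suc n)) (A n + B (Suc n))
   - a (B (Suc n) - B n) (B (Suc n) - B n)"

lemma staggered_energy_increment:
  fixes a :: "'f::real_vector \<Rightarrow> 'f \<Rightarrow> real"
  assumes b: "bilinear a" and sym: "\<And>u v. a u v = a v u"
  shows "(a (A2 + B1) (A2 + B1) + a (A1 + B2) (A1 + B2) - a (B2 - B1) (B2 - B1))
       - (a (A1 + B0) (A1 + B0) + a (A0 + B1) (A0 + B1) - a (B1 - B0) (B1 - B0))
       = a (A2 + A0) (A2 - A0) + 2 * a B1 (A2 - A0) + 2 * a A1 (B2 - B0) + 2 * a B1 (B2 - B0)"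
  by (simp add: bilinear_ladd[OF b] bilinear_radd[OF b] bilinear_lsub[OF b] bilinear_rsub[OF b]
      sym[of A0 A2] sym[of A2 B1] sym[of B2 A1] sym[of B2 B1] sym[of B0 A1] sym[of A0 B1]
      sym[of B0 B1])

lemma leapfrog_energy_increment:
  assumes m: "bilinear m" "\<And>u v. m u v = m v u" and a: "bilinear a" "\<And>u v. a u v = a v u"
  shows "leapfrog_energy m a \<tau> X C A B (Suc n) - leapfrog_energy m a \<tau> X C A B n =
    2 * (1 / \<tau>\<^sup>2 * m (X (Suc (Suc n)) - 2 *\<^sub>R X (Suc n) + X n) (X (Suc (Suc n)) - X n)
      + 1/2 * a (A (Suc (Suc n)) + A n) (A (Suc (Suc n)) - A n)
      + a (B (Suc n)) (A (Suc (Suc n)) - A n) + a (A (Suc n)) (B (Suc (Suc n)) - B n)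
      + a (B (Suc n)) (B (Suc (Suc n)) - B n)
      + 1/2 * a (C (Suc (Suc n)) + C n) (C (Suc (Suc n)) - C n))"
proof -
  let ?X2 = "X (Suc (Suc n))" and ?X1 = "X (Suc n)" and ?X0 = "X n"
  have "m (?X2 - 2 *\<^sub>R ?X1 + ?X0) (?X2 - ?X0)
      = m ((?X2 - ?X1) - (?X1 - ?X0)) ((?X2 - ?X1) + (?X1 - ?X0))"
    by (simp add: algebra_simps scaleR_2)
  also have "\<dots> = m (?X2 - ?X1) (?X2 - ?X1) - m (?X1 - ?X0) (?X1 - ?X0)"
    using symmetric_bilinear_sum_diff[OF m] m(2) by metis
  finally have "2 * (1 / \<tau>\<^sup>2 * m (?X2 - 2 *\<^sub>R ?X1 + ?X0) (?X2 - ?X0))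
      = 2 / \<tau>\<^sup>2 * m (?X2 - ?X1) (?X2 - ?X1) - 2 / \<tau>\<^sup>2 * m (?X1 - ?X0) (?X1 - ?X0)"
    by (simp add: right_diff_distrib)
  then show ?thesis
    unfolding leapfrog_energy_def
    using symmetric_bilinear_sum_diff[OF a, of "C (Suc (Suc n))" "C n"]
      staggered_energy_increment[OF a,
        of "A (Suc (Suc n))" "B (Suc n)" "A (Suc n)" "B (Suc (Suc n))" "B n" "A n"]
    by (simp add: algebra_simps)
qed

lemma scheme1_leapfrog_energy_Suc:
  fixes ip a :: "'f::real_vector \<Rightarrow> 'f \<Rightarrow> real"
    and T10 T11 :: "'v1::real_vector \<Rightarrow> 'f" and T20 T21 :: "'v2::real_vector \<Rightarrow> 'f"
    and U1 :: "nat \<Rightarrow> 'v1" and U2 :: "nat \<Rightarrow> 'v2"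
  defines "X \<equiv> \<lambda>k. T10 (U1 k) + T11 (U1 k) + (T20 (U2 k) + T21 (U2 k))"
    and "C \<equiv> \<lambda>k. T10 (U1 k) + T20 (U2 k)"
  assumes ip: "sym_psd_form ip" and a: "sym_psd_form a"
    and lin: "linear T10" "linear T11" "linear T20" "linear T21"
    and scheme: "scheme1 ip a T10 T11 T20 T21 \<tau> U1 U2"
  shows "leapfrog_energy ip a \<tau> X C (T11 \<circ> U1) (T21 \<circ> U2) (Suc n)
       = leapfrog_energy ip a \<tau> X C (T11 \<circ> U1) (T21 \<circ> U2) n"
proof -
  note lin_rules = lin[THEN linear_add] lin[THEN linear_diff] lin[THEN linear_scale]
  note ib = sym_psd_formD[OF ip] and ab = sym_psd_formD[OF a]
  define x0 x1 x2 where "x0 = U1 n" and "x1 = U1 (Suc n)" and "x2 = U1 (Suc (Suc n))"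
  define y0 y1 y2 where "y0 = U2 n" and "y1 = U2 (Suc n)" and "y2 = U2 (Suc (Suc n))"
  let ?T1 = "\<lambda>U. T10 U + T11 U" and ?T2 = "\<lambda>U. T20 U + T21 U"
  let ?d1 = "x2 - 2 *\<^sub>R x1 + x0" and ?d2 = "y2 - 2 *\<^sub>R y1 + y0"
  let ?w1 = "x2 - x0" and ?w2 = "y2 - y0"
  note eqs = scheme[unfolded scheme1_def Let_def, THEN conjunct1, rule_format, of "Suc n" ?w1]
    scheme[unfolded scheme1_def Let_def, THEN conjunct2, rule_format, of "Suc n" ?w2]
  have vec: "X (Suc (Suc n)) - 2 *\<^sub>R X (Suc n) + X n = ?T1 ?d1 + ?T2 ?d2"
    "X (Suc (Suc n)) - X n = ?T1 ?w1 + ?T2 ?w2"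
    "C (Suc (Suc n)) + C n = T10 (x2 + x0) + T20 (y2 + y0)"
    "C (Suc (Suc n)) - C n = T10 ?w1 + T20 ?w2"
    "(T11 \<circ> U1) (Suc (Suc n)) + (T11 \<circ> U1) n = T11 (x2 + x0)"
    "(T11 \<circ> U1) (Suc (Suc n)) - (T11 \<circ> U1) n = T11 ?w1"
    "(T21 \<circ> U2) (Suc (Suc n)) - (T21 \<circ> U2) n = T21 ?w2"
    by (simp_all add: X_def C_def x0_def x1_def x2_def y0_def y1_def y2_def lin_rules algebra_simps)
  have tested: "1 / \<tau>\<^sup>2 * (ip (?T1 ?d1) (?T1 ?w1) + ip (?T2 ?d2) (?T1 ?w1)
        + ip (?T1 ?d1) (?T2 ?w2) + ip (?T2 ?d2) (?T2 ?w2))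
    + 1/2 * a (T11 (x2 + x0)) (T11 ?w1) + a (T21 y1) (T11 ?w1)
    + a (T11 x1) (T21 ?w2) + a (T21 y1) (T21 ?w2)
    + 1/2 * (a (T10 (x2 + x0)) (T10 ?w1) + a (T20 (y2 + y0)) (T10 ?w1)
        + a (T10 (x2 + x0)) (T20 ?w2) + a (T20 (y2 + y0)) (T20 ?w2)) = 0"
    using eqs unfolding x0_def x1_def x2_def y0_def y1_def y2_def by (simp add: ring_distribs)
  have "leapfrog_energy ip a \<tau> X C (T11 \<circ> U1) (T21 \<circ> U2) (Suc n)
      - leapfrog_energy ip a \<tau> X C (T11 \<circ> U1) (T21 \<circ> U2) n = 0"
    unfolding leapfrog_energy_increment[OF ib(1,2) ab(1,2)] vec
      bilinear_add_add[OF ib(1), of "?T1 ?d1" "?T2 ?d2" "?T1 ?w1" "?T2 ?w2"]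
      bilinear_add_add[OF ab(1), of "T10 (x2 + x0)" "T20 (y2 + y0)" "T10 ?w1" "T20 ?w2"]
    by (simp only: comp_apply x1_def[symmetric] y1_def[symmetric] tested mult_zero_right)
  then show ?thesis by simp
qed

lemma energy_eq_leapfrog_energy:
  fixes ip a :: "'f::real_vector \<Rightarrow> 'f \<Rightarrow> real"
    and T10 T11 :: "'v1::real_vector \<Rightarrow> 'f" and T20 T21 :: "'v2::real_vector \<Rightarrow> 'f"
  assumes "bilinear ip" "bilinear a"
    and lin: "linear T10" "linear T11" "linear T20" "linear T21"
  shows "energy ip a T10 T11 T20 T21 \<tau> U1 U2 n
       = leapfrog_energy ip a \<tau> (\<lambda>k. T10 (U1 k) + T11 (U1 k) + (T20 (U2 k) + T21 (U2 k)))
           (\<lambda>k. T10 (U1 k) + T20 (U2 k)) (T11 \<circ> U1) (T21 \<circ> U2) n"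
  by (simp add: energy_def leapfrog_energy_def pnorm2_eq assms lin[THEN linear_diff] algebra_simps)

lemma scheme1_energy_Suc:
  assumes ip: "sym_psd_form ip" and a: "sym_psd_form a"
    and lin: "linear T10" "linear T11" "linear T20" "linear T21"
    and scheme: "scheme1 ip a T10 T11 T20 T21 \<tau> U1 U2"
  shows "energy ip a T10 T11 T20 T21 \<tau> U1 U2 (Suc n) = energy ip a T10 T11 T20 T21 \<tau> U1 U2 n"
  using scheme1_leapfrog_energy_Suc[OF assms]
  by (simp add: energy_eq_leapfrog_energy sym_psd_formD(1)[OF ip] sym_psd_formD(1)[OF a] lin)

lemma sym_psd_form_cauchy_schwarz_sq:
  assumes "sym_psd_form b"
  shows "(b u v)\<^sup>2 \<le> b u u * b v v"
proof -
  note b = sym_psd_formD[OF assms]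
  have quadratic_nonneg: "0 \<le> b u u - 2 * t * b u v + t\<^sup>2 * b v v" for t
    using b(3)[of "u - t *\<^sub>R v"] b(2)[of v u]
    by (simp add: bilinear_lsub[OF b(1)] bilinear_rsub[OF b(1)] bilinear_lmul[OF b(1)]
        bilinear_rmul[OF b(1)] power2_eq_square algebra_simps)
  show ?thesis
  proof (cases "b v v = 0")
    case True
    have "b u v = 0"
    proof (rule ccontr)
      assume "b u v \<noteq> 0"
      then have "b u u - 2 * ((b u u + 1) / (2 * b u v)) * b u v = -1"
        by (simp add: field_simps)
      with quadratic_nonneg[of "(b u u + 1) / (2 * b u v)"] True show False by simp
    qed
    with True show ?thesis by simp
  next
    case False
    then have pos: "b v v > 0" using b(3)[of v] by simp
    have "0 \<le> b u u - 2 * (b u v / b v v) * b u v + (b u v / b v v)\<^sup>2 * b v v"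
      by (rule quadratic_nonneg)
    also have "\<dots> = b u u - (b u v)\<^sup>2 / b v v"
      using pos by (simp add: field_simps power2_eq_square)
    finally have "(b u v)\<^sup>2 / b v v \<le> b u u" by simp
    with pos show ?thesis by (simp add: field_simps mult.commute)
  qed
qed

lemma sym_psd_form_cauchy_schwarz:
  assumes "sym_psd_form b"
  shows "\<bar>b u v\<bar> \<le> l2norm b u * l2norm b v"
proof -
  have "\<bar>b u v\<bar> = sqrt ((b u v)\<^sup>2)" by simp
  also have "\<dots> \<le> sqrt (b u u * b v v)"
    using sym_psd_form_cauchy_schwarz_sq[OF assms] by (rule real_sqrt_le_mono)
  finally show ?thesis by (simp add: l2norm_def real_sqrt_mult)
qed

lemma gamma_const_upper_bound:
  assumes ip: "sym_psd_form ip"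
  shows "ip (T1 x) (T2 y) \<le> gamma_const ip T1 T2 * (l2norm ip (T1 x) * l2norm ip (T2 y))"
proof (cases "l2norm ip (T1 x) * l2norm ip (T2 y) = 0")
  case True
  then have "ip (T1 x) (T2 y) \<le> 0"
    using sym_psd_form_cauchy_schwarz[OF ip, of "T1 x" "T2 y"] by linarith
  then show ?thesis by (simp only: True mult_zero_right)
next
  case False
  then have pos: "l2norm ip (T1 x) * l2norm ip (T2 y) > 0"
    by (simp add: l2norm_def sym_psd_formD(3)[OF ip] less_le)
  let ?cos = "\<lambda>W1 W2. ip (T1 W1) (T2 W2) / (l2norm ip (T1 W1) * l2norm ip (T2 W2))"
  have "bdd_above {?cos W1 W2 | W1 W2. l2norm ip (T1 W1) \<noteq> 0 \<and> l2norm ip (T2 W2) \<noteq> 0}"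
  proof (rule bdd_aboveI[where M = 1], clarify)
    fix W1 W2
    show "?cos W1 W2 \<le> 1"
      using sym_psd_form_cauchy_schwarz[OF ip, of "T1 W1" "T2 W2"]
      by (cases "l2norm ip (T1 W1) * l2norm ip (T2 W2) = 0")
        (auto simp: l2norm_def sym_psd_formD(3)[OF ip] less_le divide_le_eq_1)
  qed
  then have "?cos x y \<le> gamma_const ip T1 T2"
    unfolding gamma_const_def using False by (intro cSup_upper) auto
  with pos show ?thesis by (simp add: divide_le_eq)
qed

lemma gamma_const_lower_bound:
  assumes ip: "sym_psd_form ip" and "linear T1"
  shows "- gamma_const ip T1 T2 * (l2norm ip (T1 x) * l2norm ip (T2 y)) \<le> ip (T1 x) (T2 y)"
  using gamma_const_upper_bound[OF ip, of T1 "- x" T2 y] sym_psd_formD(1)[OF ip]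
  by (simp add: l2norm_def linear_neg[OF assms(2)] bilinear_lneg bilinear_rneg)

lemma sym_psd_form_add_ge:
  assumes b: "sym_psd_form b" and angle: "- g * (l2norm b u * l2norm b v) \<le> b u v"
  shows "(1 - g\<^sup>2) * b v v \<le> b (u + v) (u + v)"
proof -
  note bb = sym_psd_formD[OF b]
  define p q where "p = l2norm b u" and "q = l2norm b v"
  have "b u u = p\<^sup>2" "b v v = q\<^sup>2" by (simp_all add: p_def q_def l2norm_def bb(3))
  then have "b (u + v) (u + v) = (p - g * q)\<^sup>2 + (1 - g\<^sup>2) * q\<^sup>2 + 2 * (b u v + g * (p * q))"
    using bb(2)[of v u]
    by (simp add: bilinear_ladd[OF bb(1)] bilinear_radd[OF bb(1)] power2_eq_square algebra_simps)
  moreover have "0 \<le> (p - g * q)\<^sup>2 + 2 * (b u v + g * (p * q))"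
    using angle by (simp add: p_def q_def)
  ultimately show ?thesis
    unfolding \<open>b v v = q\<^sup>2\<close> by linarith
qed

lemma mass_stiff_inf_le:
  fixes ip a :: "'f::real_vector \<Rightarrow> 'f \<Rightarrow> real" and T21 :: "'v2::real_vector \<Rightarrow> 'f"
  assumes ip: "sym_psd_form ip" and a: "sym_psd_form a" and "linear T21" and "0 \<le> c"
    and cfl: "ereal (\<tau>\<^sup>2) \<le> ereal c * mass_stiff_inf ip a T2 T21"
  shows "\<tau>\<^sup>2 * a (T21 y) (T21 y) \<le> c * ip (T2 y) (T2 y)"
proof (cases "a (T21 y) (T21 y) = 0")
  case True
  then show ?thesis using \<open>0 \<le> c\<close> sym_psd_formD(3)[OF ip] by simp
next
  case False
  define s where "s = a (T21 y) (T21 y)"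
  have s: "s > 0" using False sym_psd_formD(3)[OF a] by (simp add: s_def less_le)
  have "y \<noteq> 0"
    using False linear_0[OF \<open>linear T21\<close>] bilinear_lzero[OF sym_psd_formD(1)[OF a]] by auto
  then have "mass_stiff_inf ip a T2 T21 \<le> ereal (ip (T2 y) (T2 y)) / ereal s"
    unfolding mass_stiff_inf_def s_def by (intro Inf_lower) blast
  also have "\<dots> = ereal (ip (T2 y) (T2 y) / s)" using s by simp
  finally have "ereal (\<tau>\<^sup>2) \<le> ereal (c * (ip (T2 y) (T2 y) / s))"
    using cfl \<open>0 \<le> c\<close> by (metis ereal_mult_left_mono ereal_less_eq(5) order_trans times_ereal.simps(1))
  with s show ?thesis by (simp add: s_def field_simps)
qed

lemma energy_ge_stiffness_terms:
  fixes ip a :: "'f::real_vector \<Rightarrow> 'f \<Rightarrow> real"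
    and T10 T11 :: "'v1::real_vector \<Rightarrow> 'f" and T20 T21 :: "'v2::real_vector \<Rightarrow> 'f"
  defines "T1 \<equiv> \<lambda>U. T10 U + T11 U" and "T2 \<equiv> \<lambda>U. T20 U + T21 U"
  defines "\<gamma> \<equiv> gamma_const ip T1 T2"
  assumes ip: "sym_psd_form ip" and a: "sym_psd_form a"
    and lin: "linear T10" "linear T11" "linear T20" "linear T21"
    and gamma: "\<bar>\<gamma>\<bar> \<le> 1" and tau: "0 < \<tau>"
    and cfl: "ereal (\<tau>\<^sup>2) \<le> ereal (2 * (1 - \<gamma>\<^sup>2)) * mass_stiff_inf ip a T2 T21"
  shows "pnorm2 a T10 T20 (U1 (n+1)) (U2 (n+1)) + pnorm2 a T10 T20 (U1 n) (U2 n)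
       + pnorm2 a T11 T21 (U1 (n+1)) (U2 n) + pnorm2 a T11 T21 (U1 n) (U2 (n+1))
       \<le> energy ip a T10 T11 T20 T21 \<tau> U1 U2 n"
proof -
  define dx dy where "dx = U1 (n+1) - U1 n" and "dy = U2 (n+1) - U2 n"
  have "linear T1" "linear T2" unfolding T1_def T2_def using lin by (auto intro: linear_compose_add)
  have "\<gamma>\<^sup>2 \<le> 1" using gamma by (simp add: abs_square_le_1)
  have "\<tau>\<^sup>2 * a (T21 dy) (T21 dy) \<le> 2 * (1 - \<gamma>\<^sup>2) * ip (T2 dy) (T2 dy)"
    using mass_stiff_inf_le[OF ip a lin(4) _ cfl] \<open>\<gamma>\<^sup>2 \<le> 1\<close> by simp
  also have "\<dots> \<le> 2 * ip (T1 dx + T2 dy) (T1 dx + T2 dy)"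
    using sym_psd_form_add_ge[OF ip gamma_const_lower_bound[OF ip \<open>linear T1\<close>, of T2 dx dy]]
    unfolding \<gamma>_def by linarith
  finally have "a (T21 dy) (T21 dy) \<le> 2 / \<tau>\<^sup>2 * pnorm2 ip T1 T2 dx dy"
    using tau by (simp add: pnorm2_eq sym_psd_formD(1)[OF ip] field_simps)
  then show ?thesis
    by (simp add: energy_def T1_def T2_def dx_def dy_def)
qed

theorem theorem2:
  fixes ip a :: "'f::real_vector \<Rightarrow> 'f \<Rightarrow> real"
    and T10 T11 :: "'v1::euclidean_space \<Rightarrow> 'f"
    and T20 T21 :: "'v2::euclidean_space \<Rightarrow> 'f"
    and \<tau> :: real
    and U1 :: "nat \<Rightarrow> 'v1" and U2 :: "nat \<Rightarrow> 'v2"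
  defines "T1 \<equiv> (\<lambda>U. T10 U + T11 U)" and "T2 \<equiv> (\<lambda>U. T20 U + T21 U)"
  defines "\<gamma> \<equiv> gamma_const ip T1 T2"
  assumes ip: "sym_psd_form ip" and a: "sym_psd_form a"
    and lin: "linear T10" "linear T11" "linear T20" "linear T21"
    and gamma: "0 < \<gamma>" "\<gamma> < 1"
    and tau: "0 < \<tau>"
    and cfl: "ereal (\<tau>\<^sup>2) \<le> ereal (2 * (1 - \<gamma>\<^sup>2)) * mass_stiff_inf ip a T2 T21"
    and scheme: "scheme1 ip a T10 T11 T20 T21 \<tau> U1 U2"
  shows "\<forall>n. energy ip a T10 T11 T20 T21 \<tau> U1 U2 n = energy ip a T10 T11 T20 T21 \<tau> U1 U2 0
           \<and> energy ip a T10 T11 T20 T21 \<tau> U1 U2 n \<ge>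
               pnorm2 a T10 T20 (U1 (n+1)) (U2 (n+1)) + pnorm2 a T10 T20 (U1 n) (U2 n)
             + pnorm2 a T11 T21 (U1 (n+1)) (U2 n) + pnorm2 a T11 T21 (U1 n) (U2 (n+1))
           \<and> pnorm2 a T10 T20 (U1 (n+1)) (U2 (n+1)) + pnorm2 a T10 T20 (U1 n) (U2 n)
             + pnorm2 a T11 T21 (U1 (n+1)) (U2 n) + pnorm2 a T11 T21 (U1 n) (U2 (n+1)) \<ge> 0"
proof (intro allI conjI)
  fix n
  show "energy ip a T10 T11 T20 T21 \<tau> U1 U2 n = energy ip a T10 T11 T20 T21 \<tau> U1 U2 0"
    by (induction n) (simp_all add: scheme1_energy_Suc[OF ip a lin scheme])
  have "\<bar>\<gamma>\<bar> \<le> 1" using gamma by simp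
  then show "energy ip a T10 T11 T20 T21 \<tau> U1 U2 n \<ge>
      pnorm2 a T10 T20 (U1 (n+1)) (U2 (n+1)) + pnorm2 a T10 T20 (U1 n) (U2 n)
    + pnorm2 a T11 T21 (U1 (n+1)) (U2 n) + pnorm2 a T11 T21 (U1 n) (U2 (n+1))"
    using energy_ge_stiffness_terms[OF ip a lin _ tau] cfl unfolding \<gamma>_def T1_def T2_def by blast
  show "pnorm2 a T10 T20 (U1 (n+1)) (U2 (n+1)) + pnorm2 a T10 T20 (U1 n) (U2 n)
    + pnorm2 a T11 T21 (U1 (n+1)) (U2 n) + pnorm2 a T11 T21 (U1 n) (U2 (n+1)) \<ge> 0"
    by (simp add: pnorm2_eq sym_psd_formD[OF a])
qed

end
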